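(* Let $B_n=\binom{2n}{n}$ for $n\ge0$ and $B_n=0$ for $n<0$, and let $D_m(B;n)=\det(B_{i+j+m})_{i,j=0}^{n-1}$. Then for every integer $m\ge1$: $D_{-m}(B;n)=0$ for $1\le n\le m$, and for $n\ge m+1$ $$D_{-m}(B;n)=(-1)^{\binom{m+1}{2}}\,2^{\,n-m-1}\,p_{m+1}(n-m-1).$$
   Context: For integers $m,n\ge 0$, $p_m(n)=\prod_{1\le i\le j\le m-1}\frac{2n+i+j}{i+j}$ (empty product $=1$). *)

theory Defs
  imports Main "Jordan_Normal_Form.Determinant"
begin

definition B :: "int \<Rightarrow> int" where
  "B k = (if k < 0 then 0 else int ((2 * nat k) choose (nat k)))"

definition D :: "int \<Rightarrow> nat \<Rightarrow> int" where
  "D m n = det (mat n n (\<lambda>(i, j). B (int i + int j + m)))"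

definition p :: "nat \<Rightarrow> nat \<Rightarrow> rat" where
  "p m n = (\<Prod>(i, j)\<in>{(i, j). 1 \<le> i \<and> i \<le> j \<and> j \<le> m - 1}.
              (of_nat (2 * n + i + j) / of_nat (i + j)))"

end

theory Submission
  imports Defs "HOL-Computational_Algebra.Formal_Power_Series"
begin

text \<open>Vandermonde's convolution gives B(i + j - m) = \<Sum>k binom(2i, i - k) R(j, k) with
  R(j, k) = binom(2d, d + k) + binom(2d, d - k) for d = j - m (generalised binomials, the second
  term only for k > 0), so the Hankel matrix is L R^T with L lower unitriangular. For j \<ge> m the
  row of R vanishes beyond the diagonal, where it is 1, 2, 2, ...; moving these n - m rows to the
  top makes R block lower triangular. In the remaining m rows, up to row and column factors,
  R(j, k) is a monic polynomial of degree m - 1 - j in k^2, so the complementary block is a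
  Vandermonde determinant in the squares (n - m + c)^2. The resulting product is matched with
  p(m + 1, n - m - 1) by induction on m.\<close>

lemma det_mat_zero_row:
  fixes f :: "nat \<Rightarrow> nat \<Rightarrow> 'a::comm_ring_1"
  assumes "k < n" and "\<And>j. j < n \<Longrightarrow> f k j = 0"
  shows "det (mat n n (\<lambda>(i, j). f i j)) = 0"
proof -
  have "(\<Prod>i = 0..<n. mat n n (\<lambda>(i, j). f i j) $$ (i, \<sigma> i)) = 0" if "\<sigma> permutes {0..<n}" for \<sigma>
    using assms permutes_in_image[OF that, of k] by (intro prod_zero bexI[of _ k]) auto
  then show ?thesis
    by (simp add: det_def'[of _ n])
qed

lemma det_mat_lower_triangular:
  fixes f :: "nat \<Rightarrow> nat \<Rightarrow> 'a::comm_ring_1"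
  assumes "\<And>i j. i < j \<Longrightarrow> j < n \<Longrightarrow> f i j = 0"
  shows "det (mat n n (\<lambda>(i, j). f i j)) = (\<Prod>i<n. f i i)"
  using assms by (subst det_lower_triangular[of n]) (auto simp: prod_list_diag_prod atLeast0LessThan)

lemma det_mat_upper_triangular:
  fixes f :: "nat \<Rightarrow> nat \<Rightarrow> 'a::comm_ring_1"
  assumes "\<And>i j. j < i \<Longrightarrow> i < n \<Longrightarrow> f i j = 0"
  shows "det (mat n n (\<lambda>(i, j). f i j)) = (\<Prod>i<n. f i i)"
  using assms by (subst det_upper_triangular[of _ n])
    (auto simp: prod_list_diag_prod atLeast0LessThan upper_triangular_def)

lemma det_mat_scale_rows_cols:
  fixes e :: "nat \<Rightarrow> nat \<Rightarrow> 'a::comm_ring_1"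
  shows "det (mat n n (\<lambda>(i, j). f i * g j * e i j))
           = (\<Prod>i<n. f i) * (\<Prod>j<n. g j) * det (mat n n (\<lambda>(i, j). e i j))"
proof -
  have "signof \<sigma> * (\<Prod>i = 0..<n. f i * g (\<sigma> i) * e i (\<sigma> i))
          = (\<Prod>i<n. f i) * (\<Prod>j<n. g j) * (signof \<sigma> * (\<Prod>i = 0..<n. e i (\<sigma> i)))"
    if "\<sigma> permutes {0..<n}" for \<sigma>
    using prod.permute[OF that, of g]
    by (simp add: prod.distrib comp_def atLeast0LessThan ac_simps)
  then show ?thesis
    by (simp add: det_def'[of _ n] sum_distrib_left)
qed

lemma det_mat_last_rows_block:
  fixes f :: "nat \<Rightarrow> nat \<Rightarrow> 'a::idom"
  assumes "\<And>i k. i < a \<Longrightarrow> a \<le> k \<Longrightarrow> k < a + b \<Longrightarrow> f (i + b) k = 0"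
  shows "det (mat (a + b) (a + b) (\<lambda>(j, k). f j k))
           = (-1) ^ (a * b) * det (mat a a (\<lambda>(i, k). f (i + b) k)) * det (mat b b (\<lambda>(j, c). f j (a + c)))"
proof -
  let ?T = "mat a a (\<lambda>(i, k). f (i + b) k)"
  let ?X = "mat b a (\<lambda>(j, k). f j k)"
  let ?Y = "mat b b (\<lambda>(j, c). f j (a + c))"
  let ?F = "mat (a + b) (a + b) (\<lambda>(j, k). f j k)"
  have "mat (a + b) (a + b) (\<lambda>(i, j). ?F $$ (if i < a then i + b else i - a, j))
          = four_block_mat ?T (0\<^sub>m a b) ?X ?Y"
    using assms by (intro eq_matI) (auto simp: index_mat_four_block)
  then show ?thesis
    using det_swap_rows[of ?F a b]
    by (simp add: det_four_block_mat_upper_right_zero[of ?T a _ b ?X ?Y])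
qed

lemma prod_pairs_lessThan_Suc:
  fixes h :: "nat \<Rightarrow> nat \<Rightarrow> 'a::comm_monoid_mult"
  shows "(\<Prod>c<Suc m. \<Prod>c'\<in>{c<..<Suc m}. h c c') = (\<Prod>c<m. \<Prod>c'\<in>{c<..<m}. h c c') * (\<Prod>c<m. h c m)"
proof -
  have "{c<..<Suc m} = insert m {c<..<m}" if "c < m" for c
    using that by auto
  then have "(\<Prod>c<m. \<Prod>c'\<in>{c<..<Suc m}. h c c') = (\<Prod>c<m. h c m * (\<Prod>c'\<in>{c<..<m}. h c c'))"
    by (intro prod.cong) auto
  moreover have "{m<..<Suc m} = {}"
    by auto
  ultimately show ?thesis
    by (simp add: prod.distrib ac_simps)
qed

definition newton_poly :: "(nat \<Rightarrow> 'a::comm_ring_1) \<Rightarrow> nat \<Rightarrow> 'a \<Rightarrow> 'a" where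
  "newton_poly a q x = (\<Prod>l<q. x - a l)"

lemma newton_vandermonde_row_reduction:
  fixes w :: "nat \<Rightarrow> 'a::comm_ring_1"
  shows "mat (Suc m) (Suc m) (\<lambda>(j, k). if k = j then 1 else if k = Suc j then a (m - Suc j) - w m else 0)
           * mat (Suc m) (Suc m) (\<lambda>(j, c). newton_poly a (m - j) (w c))
         = four_block_mat (mat m m (\<lambda>(j, c). (w c - w m) * newton_poly a (m - 1 - j) (w c)))
             (0\<^sub>m m 1) (mat 1 m (\<lambda>_. 1)) (1\<^sub>m 1)"
    (is "?L * ?V = ?B")
proof (rule eq_matI)
  fix j c
  assume "j < dim_row ?B" and "c < dim_col ?B"
  then have j: "j < Suc m" and c: "c < Suc m"
    by auto
  have "(?L * ?V) $$ (j, c) = (\<Sum>k = 0..<Suc m. (if k = j then ?V $$ (j, c) else 0)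
      + (if k = Suc j then (a (m - Suc j) - w m) * ?V $$ (Suc j, c) else 0))"
    using j c by (auto simp: scalar_prod_def intro!: sum.cong)
  also have "\<dots> = ?V $$ (j, c) + (if j < m then (a (m - Suc j) - w m) * ?V $$ (Suc j, c) else 0)"
    using j by (simp add: sum.distrib)
  also have "\<dots> = ?B $$ (j, c)"
  proof (cases "j < m")
    case True
    then have "m - j = Suc (m - Suc j)" and "?V $$ (Suc j, c) = newton_poly a (m - Suc j) (w c)"
      using c by simp_all
    then show ?thesis
      using True c by (auto simp: newton_poly_def four_block_mat_def less_Suc_eq algebra_simps)
  next
    case False
    then show ?thesis
      using j c by (auto simp: newton_poly_def four_block_mat_def)
  qed
  finally show "(?L * ?V) $$ (j, c) = ?B $$ (j, c)" .
qed auto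

lemma det_newton_vandermonde:
  fixes w :: "nat \<Rightarrow> 'a::idom"
  shows "det (mat m m (\<lambda>(j, c). newton_poly a (m - 1 - j) (w c))) = (\<Prod>c<m. \<Prod>c'\<in>{c<..<m}. w c - w c')"
proof (induction m)
  case 0
  show ?case by simp
next
  case (Suc m)
  let ?V = "mat (Suc m) (Suc m) (\<lambda>(j, c). newton_poly a (m - j) (w c))"
  let ?L = "mat (Suc m) (Suc m) (\<lambda>(j, k). if k = j then 1 else if k = Suc j then a (m - Suc j) - w m else 0)"
  let ?W = "mat m m (\<lambda>(j, c). (w c - w m) * newton_poly a (m - 1 - j) (w c))"
  have "det ?L = 1"
    by (subst det_mat_upper_triangular) auto
  then have "det ?V = det (?L * ?V)"
    by (simp add: det_mult[of ?L "Suc m" ?V])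
  also have "\<dots> = det ?W * det (1\<^sub>m 1)"
    unfolding newton_vandermonde_row_reduction by (rule det_four_block_mat_upper_right_zero) auto
  also have "\<dots> = (\<Prod>c<m. w c - w m) * (\<Prod>c<m. \<Prod>c'\<in>{c<..<m}. w c - w c')"
    unfolding Suc.IH[symmetric]
    using det_mat_scale_rows_cols[where f = "\<lambda>_. 1" and g = "\<lambda>c. w c - w m"
        and e = "\<lambda>j c. newton_poly a (m - 1 - j) (w c)" and n = m]
    by simp
  finally show ?case
    unfolding prod_pairs_lessThan_Suc by (simp add: mult.commute)
qed

lemma gbinomial_odd_eq_prod:
  fixes y :: "'a::field_char_0"
  shows "(y + of_nat q) gchoose (2 * q + 1) = y * (\<Prod>l<q. y\<^sup>2 - of_nat (l + 1) ^ 2) / fact (2 * q + 1)"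
proof (induction q)
  case 0
  show ?case by simp
next
  case (Suc q)
  define a where "a = y + of_nat q"
  have step: "a gchoose Suc k = (a - of_nat k) / of_nat (Suc k) * (a gchoose k)" for k
  proof -
    have "of_nat (Suc k) * (a gchoose Suc k) = (a - of_nat k) * (a gchoose k)"
      using gbinomial_absorption[of k a] gbinomial_absorb_comp[of a k] by simp
    then show ?thesis
      by (simp add: field_simps del: of_nat_Suc)
  qed
  have key: "(a + 1) * (a - of_nat (2 * q + 1)) = y\<^sup>2 - of_nat (Suc q) ^ 2"
    by (simp add: a_def algebra_simps power2_eq_square)
  have fact: "of_nat (2 * q + 3) * of_nat (2 * q + 2) * fact (2 * q + 1) = (fact (2 * Suc q + 1) :: 'a)"
    by (simp add: numeral_3_eq_3 numeral_2_eq_2)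
  have "(y + of_nat (Suc q)) gchoose (2 * Suc q + 1)
          = (a + 1) * (a - of_nat (2 * q + 1)) * (a gchoose (2 * q + 1)) / (of_nat (2 * q + 3) * of_nat (2 * q + 2))"
    using gbinomial_factors[of a "Suc (2 * q + 1)"] step[of "2 * q + 1"]
    by (simp add: a_def add_ac mult_ac numeral_3_eq_3 numeral_2_eq_2)
  also have "\<dots> = (y\<^sup>2 - of_nat (Suc q) ^ 2) * (y * (\<Prod>l<q. y\<^sup>2 - of_nat (l + 1) ^ 2) / fact (2 * q + 1))
                   / (of_nat (2 * q + 3) * of_nat (2 * q + 2))"
    unfolding key Suc.IH[folded a_def] ..
  also have "\<dots> = y * (\<Prod>l<Suc q. y\<^sup>2 - of_nat (l + 1) ^ 2) / fact (2 * Suc q + 1)"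
    unfolding fact[symmetric] by (simp add: field_simps)
  finally show ?case .
qed

definition gbinomial_int :: "'a::field_char_0 \<Rightarrow> int \<Rightarrow> 'a" where
  "gbinomial_int a s = (if s < 0 then 0 else a gchoose nat s)"

lemma gbinomial_int_of_nat: "gbinomial_int (of_nat n) (int k) = of_nat (n choose k)"
  by (simp add: gbinomial_int_def binomial_gbinomial)

lemma gbinomial_Vandermonde_int:
  fixes b :: "'a::field_char_0"
  shows "(of_nat n + b) gchoose T = (\<Sum>a\<le>n. of_nat (n choose a) * gbinomial_int b (int T - int a))"
proof -
  have "(of_nat n + b) gchoose T = (\<Sum>a = 0..T. of_nat (n choose a) * gbinomial_int b (int T - int a))"
    unfolding gbinomial_Vandermonde[symmetric]
    by (intro sum.cong) (auto simp: gbinomial_int_def binomial_gbinomial nat_diff_distrib)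
  also have "\<dots> = (\<Sum>a = 0..n + T. of_nat (n choose a) * gbinomial_int b (int T - int a))"
    by (intro sum.mono_neutral_left) (auto simp: gbinomial_int_def)
  also have "\<dots> = (\<Sum>a\<le>n. of_nat (n choose a) * gbinomial_int b (int T - int a))"
    unfolding atLeast0AtMost by (intro sum.mono_neutral_right) auto
  finally show ?thesis .
qed

lemma sum_binomial_fold:
  fixes h :: "int \<Rightarrow> 'a::comm_semiring_1"
  shows "(\<Sum>a\<le>2 * i. of_nat (2 * i choose a) * h (int i - int a))
           = (\<Sum>k\<le>i. of_nat (2 * i choose (i - k)) * (h (int k) + (if k = 0 then 0 else h (- int k))))"
proof -
  define F where "F a = of_nat (2 * i choose a) * h (int i - int a)" for a
  have "{..2 * i} = {..i} \<union> {Suc i..2 * i}"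
    by auto
  then have "(\<Sum>a\<le>2 * i. F a) = (\<Sum>a = 0..i. F a) + (\<Sum>a = Suc i..2 * i. F a)"
    by (simp add: sum.union_disjoint atLeast0AtMost)
  also have "(\<Sum>a = 0..i. F a) = (\<Sum>k = 0..i. of_nat (2 * i choose (i - k)) * h (int k))"
    by (subst sum.atLeastAtMost_rev) (auto simp: F_def of_nat_diff intro!: sum.cong)
  also have "(\<Sum>a = Suc i..2 * i. F a) = (\<Sum>k = 1..i. F (k + i))"
    using sum.shift_bounds_cl_nat_ivl[of F 1 i i] by (simp add: mult_2)
  also have "\<dots> = (\<Sum>k = 1..i. of_nat (2 * i choose (i - k)) * h (- int k))"
  proof (intro sum.cong)
    fix k
    assume "k \<in> {1..i}"
    then show "F (k + i) = of_nat (2 * i choose (i - k)) * h (- int k)"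
      using binomial_symmetric[of "k + i" "2 * i"] by (simp add: F_def)
  qed simp
  also have "\<dots> = (\<Sum>k = 0..i. of_nat (2 * i choose (i - k)) * (if k = 0 then 0 else h (- int k)))"
    by (intro sum.mono_neutral_cong_left) auto
  finally show ?thesis
    by (simp add: F_def atLeast0AtMost sum.distrib distrib_left)
qed

definition hankel_factor :: "int \<Rightarrow> nat \<Rightarrow> rat" where
  "hankel_factor d k = gbinomial_int (of_int (2 * d)) (d + int k)
     + (if k = 0 then 0 else gbinomial_int (of_int (2 * d)) (d - int k))"

lemma of_int_B_eq_sum_hankel_factor:
  "(of_int (B (int i + d)) :: rat) = (\<Sum>k\<le>i. of_nat (2 * i choose (i - k)) * hankel_factor d k)"
proof (cases "int i + d < 0")
  case True
  then have "hankel_factor d k = 0" if "k \<le> i" for k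
    using that by (simp add: hankel_factor_def gbinomial_int_def)
  with True show ?thesis
    by (simp add: B_def)
next
  case False
  define T where "T = nat (int i + d)"
  define h where "h t = gbinomial_int (of_int (2 * d) :: rat) (d + t)" for t
  have T: "int T = int i + d"
    using False by (simp add: T_def)
  have "of_int (B (int i + d)) = (of_nat (2 * T) gchoose T :: rat)"
    by (simp add: B_def T[symmetric] binomial_gbinomial)
  also have "(of_nat (2 * T) :: rat) = of_nat (2 * i) + of_int (2 * d)"
    using T by simp
  also have "(of_nat (2 * i) + of_int (2 * d)) gchoose T
               = (\<Sum>a\<le>2 * i. of_nat (2 * i choose a) * h (int i - int a))"
    unfolding gbinomial_Vandermonde_int h_def T by (simp add: algebra_simps)
  also have "\<dots> = (\<Sum>k\<le>i. of_nat (2 * i choose (i - k)) * hankel_factor d k)"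
    unfolding sum_binomial_fold unfolding h_def hankel_factor_def by (simp cong: if_cong)
  finally show ?thesis .
qed

lemma of_int_D_eq_det_hankel_factor:
  "(of_int (D e n) :: rat) = det (mat n n (\<lambda>(j, k). hankel_factor (int j + e) k))"
proof -
  let ?L = "mat n n (\<lambda>(i, k). if k \<le> i then of_nat (2 * i choose (i - k)) else 0 :: rat)"
  let ?R = "mat n n (\<lambda>(j, k). hankel_factor (int j + e) k)"
  have factor: "map_mat of_int (mat n n (\<lambda>(i, j). B (int i + int j + e))) = ?L * ?R\<^sup>T"
  proof (rule eq_matI)
    fix i j
    assume "i < dim_row (?L * ?R\<^sup>T)" "j < dim_col (?L * ?R\<^sup>T)"
    then have ij: "i < n" "j < n"
      by auto
    have "(?L * ?R\<^sup>T) $$ (i, j)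
            = (\<Sum>k<n. (if k \<le> i then of_nat (2 * i choose (i - k)) else 0) * hankel_factor (int j + e) k)"
      using ij by (simp add: scalar_prod_def atLeast0LessThan)
    also have "\<dots> = (\<Sum>k\<le>i. of_nat (2 * i choose (i - k)) * hankel_factor (int j + e) k)"
      using ij by (intro sum.mono_neutral_cong_right) auto
    also have "\<dots> = of_int (B (int i + (int j + e)))"
      by (rule of_int_B_eq_sum_hankel_factor[symmetric])
    finally show "map_mat of_int (mat n n (\<lambda>(i, j). B (int i + int j + e))) $$ (i, j) = (?L * ?R\<^sup>T) $$ (i, j)"
      using ij by (simp add: add.assoc)
  qed auto
  have "det ?L = 1"
    by (subst det_mat_lower_triangular) auto
  have "(of_int (D e n) :: rat) = det (?L * ?R\<^sup>T)"
    unfolding D_def of_int_hom.hom_det[symmetric] factor ..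
  also have "\<dots> = det ?R"
    using det_mult[of ?L n "?R\<^sup>T"] det_transpose[of ?R n] \<open>det ?L = 1\<close> by simp
  finally show ?thesis .
qed

lemma hankel_factor_nonneg:
  "hankel_factor (int u) k
     = of_nat (2 * u choose (u + k)) + (if k = 0 then 0 else gbinomial_int (of_nat (2 * u)) (int u - int k))"
proof -
  have two_u: "of_int (2 * int u) = (of_nat (2 * u) :: rat)"
    by simp
  show ?thesis
    unfolding hankel_factor_def two_u of_nat_add[symmetric] gbinomial_int_of_nat ..
qed

lemma hankel_factor_nonneg_above_diag:
  assumes "u < k"
  shows "hankel_factor (int u) k = 0"
  using assms by (simp add: hankel_factor_nonneg binomial_eq_0 gbinomial_int_def)

lemma hankel_factor_nonneg_diag: "hankel_factor (int u) u = (if u = 0 then 1 else 2)"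
  by (simp add: hankel_factor_nonneg gbinomial_int_def flip: mult_2)

lemma hankel_factor_neg:
  "hankel_factor (- int (Suc q)) k = (-1) ^ (k + q + 1) * of_nat ((k + q) choose (2 * q + 1))"
proof (cases "k \<le> q")
  case True
  then show ?thesis
    by (simp add: hankel_factor_def gbinomial_int_def binomial_eq_0)
next
  case False
  define s where "s = k - Suc q"
  have k: "k = s + Suc q"
    using False by (simp add: s_def)
  have "(of_int (2 * - int (Suc q)) gchoose s :: rat) = (- of_nat (2 * Suc q)) gchoose s"
    by simp
  also have "\<dots> = (-1) ^ s * ((of_nat (2 * Suc q) + of_nat s - 1) gchoose s)"
    by (rule gbinomial_minus)
  also have "of_nat (2 * Suc q) + of_nat s - 1 = (of_nat (k + q) :: rat)"
    using k by simp
  also have "of_nat (k + q) gchoose s = (of_nat ((k + q) choose s) :: rat)"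
    by (rule binomial_gbinomial[symmetric])
  also have "(k + q) choose s = (k + q) choose (2 * q + 1)"
  proof -
    have "s \<le> k + q" "k + q - s = 2 * q + 1"
      using k by simp_all
    then show ?thesis
      by (metis binomial_symmetric)
  qed
  also have "(-1 :: rat) ^ s = (-1) ^ (k + q + 1)"
    using k by (simp add: power_add)
  finally show ?thesis
    using k by (simp add: hankel_factor_def gbinomial_int_def)
qed

lemma hankel_factor_neg_eq_newton_poly:
  "hankel_factor (- int (Suc q)) k
     = (-1) ^ (q + 1) / fact (2 * q + 1) * ((-1) ^ k * of_nat k) * newton_poly (\<lambda>l. of_nat (l + 1) ^ 2) q (of_nat k ^ 2)"
proof -
  have "hankel_factor (- int (Suc q)) k = (-1) ^ (k + q + 1) * ((of_nat k + of_nat q) gchoose (2 * q + 1))"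
    unfolding hankel_factor_neg binomial_gbinomial by simp
  then show ?thesis
    unfolding gbinomial_odd_eq_prod by (simp add: newton_poly_def power_add)
qed

definition hankel_tail_prod :: "nat \<Rightarrow> nat \<Rightarrow> rat" where
  "hankel_tail_prod m K =
     (\<Prod>q<m. (-1) ^ (q + 1) / fact (2 * q + 1)) * (\<Prod>c<m. (-1) ^ (K + 1 + c) * of_nat (K + 1 + c))
       * (\<Prod>c<m. \<Prod>c'\<in>{c<..<m}. of_nat (K + 1 + c) ^ 2 - of_nat (K + 1 + c') ^ 2)"

lemma det_hankel_factor_tail:
  "det (mat m m (\<lambda>(j, c). hankel_factor (int j - int m) (K + 1 + c))) = hankel_tail_prod m K"
proof -
  define f where "f q = ((-1) ^ (q + 1) / fact (2 * q + 1) :: rat)" for q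
  define g where "g c = ((-1) ^ (K + 1 + c) * of_nat (K + 1 + c) :: rat)" for c
  define a where "a = (\<lambda>l. of_nat (l + 1) ^ 2 :: rat)"
  define w where "w c = (of_nat (K + 1 + c) ^ 2 :: rat)" for c
  have "hankel_factor (int j - int m) (K + 1 + c) = f (m - Suc j) * g c * newton_poly a (m - 1 - j) (w c)"
    if "j < m" for j c
  proof -
    have shift: "int j - int m = - int (Suc (m - Suc j))"
      using that by simp
    show ?thesis
      unfolding shift hankel_factor_neg_eq_newton_poly by (simp add: f_def g_def a_def w_def)
  qed
  then have entries: "mat m m (\<lambda>(j, c). hankel_factor (int j - int m) (K + 1 + c))
               = mat m m (\<lambda>(j, c). f (m - Suc j) * g c * newton_poly a (m - 1 - j) (w c))"
    by (intro eq_matI) auto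
  show ?thesis
    unfolding entries det_mat_scale_rows_cols det_newton_vandermonde prod.nat_diff_reindex
    by (simp add: hankel_tail_prod_def f_def g_def w_def)
qed

lemma det_hankel_factor_shifted:
  "det (mat (K + 1 + m) (K + 1 + m) (\<lambda>(j, k). hankel_factor (int j - int m) k))
     = (-1) ^ ((K + 1) * m) * 2 ^ K * hankel_tail_prod m K"
proof -
  have "det (mat (K + 1 + m) (K + 1 + m) (\<lambda>(j, k). hankel_factor (int j - int m) k))
          = (-1) ^ ((K + 1) * m) * det (mat (K + 1) (K + 1) (\<lambda>(i, k). hankel_factor (int (i + m) - int m) k))
              * det (mat m m (\<lambda>(j, c). hankel_factor (int j - int m) (K + 1 + c)))"
    by (rule det_mat_last_rows_block) (simp add: hankel_factor_nonneg_above_diag)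
  also have "det (mat (K + 1) (K + 1) (\<lambda>(i, k). hankel_factor (int (i + m) - int m) k))
               = (\<Prod>i<Suc K. if i = 0 then 1 else 2)"
    by (subst det_mat_lower_triangular) (auto simp: hankel_factor_nonneg_above_diag hankel_factor_nonneg_diag)
  also have "\<dots> = 2 ^ K"
    by (subst prod.lessThan_Suc_shift) simp
  also have "det (mat m m (\<lambda>(j, c). hankel_factor (int j - int m) (K + 1 + c))) = hankel_tail_prod m K"
    by (rule det_hankel_factor_tail)
  finally show ?thesis .
qed

lemma p_1: "p (Suc 0) K = 1"
  unfolding p_def by (rule prod.neutral) auto

lemma p_Suc:
  "p (Suc (Suc m)) K = p (Suc m) K * (\<Prod>i<Suc m. of_nat (2 * K + (i + 1) + (m + 1)) / of_nat ((i + 1) + (m + 1)))"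
proof -
  define S where "S m = {(i, j). 1 \<le> i \<and> i \<le> j \<and> j \<le> m}" for m :: nat
  define h where "h = (\<lambda>(i, j). of_nat (2 * K + i + j) / of_nat (i + j) :: rat)"
  have p_S: "p (Suc m) K = prod h (S m)" for m
    unfolding p_def S_def h_def by simp
  have "finite (S m)" for m
    by (rule finite_subset[of _ "{0..m} \<times> {0..m}"]) (auto simp: S_def)
  moreover have "S (Suc m) = S m \<union> (\<lambda>i. (i + 1, m + 1)) ` {..<Suc m}"
  proof -
    have "(i, Suc m) \<in> (\<lambda>i. (i + 1, m + 1)) ` {..<Suc m}" if "1 \<le> i" "i \<le> Suc m" for i
      using that by (intro image_eqI[of _ _ "i - 1"]) auto
    then show ?thesis
      by (auto simp: S_def le_Suc_eq)
  qed
  moreover have "S m \<inter> (\<lambda>i. (i + 1, m + 1)) ` {..<Suc m} = {}"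
    by (auto simp: S_def)
  ultimately have "p (Suc (Suc m)) K = prod h (S m) * prod h ((\<lambda>i. (i + 1, m + 1)) ` {..<Suc m})"
    by (simp add: p_S prod.union_disjoint)
  also have "prod h ((\<lambda>i. (i + 1, m + 1)) ` {..<Suc m}) = (\<Prod>i<Suc m. h (i + 1, m + 1))"
    by (subst prod.reindex) (auto simp: inj_on_def)
  finally show ?thesis
    by (simp add: p_S h_def add_ac)
qed

lemma hankel_tail_prod_Suc:
  "hankel_tail_prod (Suc m) K = hankel_tail_prod m K * ((-1) ^ (m + 1) / fact (2 * m + 1)
     * ((-1) ^ (K + 1 + m) * of_nat (K + 1 + m)) * (\<Prod>c<m. of_nat (K + 1 + c) ^ 2 - of_nat (K + 1 + m) ^ 2))"
  unfolding hankel_tail_prod_def prod_pairs_lessThan_Suc by (simp add: ac_simps)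

lemma fact_add_eq_prod: "(fact (n + k) :: 'a::{comm_semiring_1, semiring_char_0}) = fact n * (\<Prod>i<k. of_nat (i + 1 + n))"
  by (induction k) (simp_all add: algebra_simps)

lemma prod_diff_squares_shift:
  "(\<Prod>c<m. of_nat (K + 1 + c) ^ 2 - of_nat (K + 1 + m) ^ 2 :: rat)
     = (-1) ^ m * fact m * (\<Prod>c<m. of_nat (2 * K + 2 + m + c))"
proof -
  have "(\<Prod>c<m. of_nat (K + 1 + c) ^ 2 - of_nat (K + 1 + m) ^ 2 :: rat)
          = (\<Prod>c<m. (-1) * (of_nat (m - c) * of_nat (2 * K + 2 + m + c)))"
    by (intro prod.cong) (auto simp: of_nat_diff power2_eq_square algebra_simps)
  also have "\<dots> = (-1) ^ m * (\<Prod>c<m. of_nat (m - c)) * (\<Prod>c<m. of_nat (2 * K + 2 + m + c))"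
    by (simp only: prod.distrib prod_constant card_lessThan mult.assoc)
  also have "(\<Prod>c<m. of_nat (m - c)) = (fact m :: rat)"
    by (simp add: fact_prod_rev atLeast0LessThan)
  finally show ?thesis .
qed

lemma prod_upper_half_eq_fact:
  "(\<Prod>i<Suc m. of_nat ((i + 1) + (m + 1)) :: rat) = 2 * fact (2 * m + 1) / fact m"
proof -
  have "(m + 1) + (m + 1) = Suc (2 * m + 1)"
    by simp
  then have "fact (Suc (2 * m + 1)) = (fact (m + 1) :: rat) * (\<Prod>i<m + 1. of_nat (i + 1 + (m + 1)))"
    by (metis fact_add_eq_prod)
  then have "of_nat (m + 1) * ((\<Prod>i<Suc m. of_nat ((i + 1) + (m + 1))) * fact m) = of_nat (m + 1) * (2 * fact (2 * m + 1) :: rat)"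
    by (simp add: algebra_simps)
  then have "(\<Prod>i<Suc m. of_nat ((i + 1) + (m + 1))) * fact m = (2 * fact (2 * m + 1) :: rat)"
    by (simp only: mult_cancel_left of_nat_eq_0_iff) simp
  then show ?thesis
    by (simp add: field_simps)
qed

lemma hankel_tail_prod_step:
  "(-1) ^ (K + 1) * ((-1) ^ (m + 1) / fact (2 * m + 1) * ((-1) ^ (K + 1 + m) * of_nat (K + 1 + m))
      * (\<Prod>c<m. of_nat (K + 1 + c) ^ 2 - of_nat (K + 1 + m) ^ 2))
     = (-1) ^ (m + 1) * (\<Prod>i<Suc m. of_nat (2 * K + (i + 1) + (m + 1)) / of_nat ((i + 1) + (m + 1)) :: rat)"
proof -
  define P where "P = (\<Prod>c<m. of_nat (2 * K + 2 + m + c) :: rat)"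
  define F where "F = (fact (2 * m + 1) :: rat)"
  have "F \<noteq> 0"
    by (simp add: F_def)
  have num: "(\<Prod>i<Suc m. of_nat (2 * K + (i + 1) + (m + 1)) :: rat) = P * (2 * of_nat (K + 1 + m))"
    by (simp add: P_def ac_simps)
  have signs: "(-1 :: rat) ^ (K + 1) * (-1) ^ (m + 1) * (-1) ^ (K + 1 + m) * (-1) ^ m = (-1) ^ (m + 1)"
  proof -
    have "(K + 1) + (m + 1) + (K + 1 + m) + m = (m + 1) + 2 * (K + m + 1)"
      by simp
    then have "(-1 :: rat) ^ ((K + 1) + (m + 1) + (K + 1 + m) + m) = (-1) ^ (m + 1)"
      by (simp only: power_add power_mult) simp
    then show ?thesis
      by (simp add: power_add)
  qed
  have "(-1) ^ (K + 1) * ((-1) ^ (m + 1) / F * ((-1) ^ (K + 1 + m) * of_nat (K + 1 + m)) * ((-1) ^ m * fact m * P))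
          = ((-1 :: rat) ^ (K + 1) * (-1) ^ (m + 1) * (-1) ^ (K + 1 + m) * (-1) ^ m) * (of_nat (K + 1 + m) * fact m * P / F)"
    by (simp only: times_divide_eq_left times_divide_eq_right mult_ac)
  also have "\<dots> = (-1) ^ (m + 1) * (P * (2 * of_nat (K + 1 + m)) / (2 * F / fact m))"
    unfolding signs using \<open>F \<noteq> 0\<close> by (simp add: field_simps)
  finally show ?thesis
    unfolding prod_diff_squares_shift prod_dividef num prod_upper_half_eq_fact F_def P_def .
qed

lemma signed_hankel_tail_prod_eq_p:
  "(-1) ^ ((K + 1) * m) * hankel_tail_prod m K = (-1) ^ ((m + 1) choose 2) * p (m + 1) K"
proof (induction m)
  case 0
  show ?case
    by (simp add: hankel_tail_prod_def p_1 binomial_eq_0)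
next
  case (Suc m)
  have "(-1) ^ ((K + 1) * Suc m) * hankel_tail_prod (Suc m) K
          = ((-1) ^ ((K + 1) * m) * hankel_tail_prod m K) * ((-1) ^ (m + 1)
              * (\<Prod>i<Suc m. of_nat (2 * K + (i + 1) + (m + 1)) / of_nat ((i + 1) + (m + 1))))"
    unfolding hankel_tail_prod_Suc hankel_tail_prod_step[symmetric] by (simp add: power_add ac_simps)
  also have "\<dots> = (-1) ^ ((Suc m + 1) choose 2) * p (Suc m + 1) K"
    unfolding Suc.IH by (simp add: p_Suc numeral_2_eq_2 power_add ac_simps)
  finally show ?case .
qed

theorem theorem7:
  fixes m n :: nat
  assumes "m \<ge> 1"
  shows "(1 \<le> n \<and> n \<le> m \<longrightarrow> D (- int m) n = 0) \<and>
         (n \<ge> m + 1 \<longrightarrow>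
            (of_int (D (- int m) n) :: rat) =
              (-1) ^ ((m + 1) choose 2) * 2 ^ (n - m - 1) * p (m + 1) (n - m - 1))"
proof (intro conjI impI)
  assume "1 \<le> n \<and> n \<le> m"
  then show "D (- int m) n = 0"
    unfolding D_def by (intro det_mat_zero_row[of 0]) (auto simp: B_def)
next
  assume "n \<ge> m + 1"
  define K where "K = n - m - 1"
  have n: "n = K + 1 + m"
    using \<open>n \<ge> m + 1\<close> by (simp add: K_def)
  have "(of_int (D (- int m) n) :: rat) = det (mat n n (\<lambda>(j, k). hankel_factor (int j - int m) k))"
    using of_int_D_eq_det_hankel_factor[of "- int m" n] by simp
  also have "\<dots> = 2 ^ K * ((-1) ^ ((K + 1) * m) * hankel_tail_prod m K)"
    unfolding n det_hankel_factor_shifted by (simp only: mult_ac)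
  also have "\<dots> = (-1) ^ ((m + 1) choose 2) * 2 ^ (n - m - 1) * p (m + 1) (n - m - 1)"
    unfolding signed_hankel_tail_prod_eq_p K_def by (simp only: mult_ac)
  finally show "(of_int (D (- int m) n) :: rat) = (-1) ^ ((m + 1) choose 2) * 2 ^ (n - m - 1) * p (m + 1) (n - m - 1)" .
qed

end
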